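(* Assume Condition AGCT (see context) holds and that the event $\mathrm{Good}_m$ occurs. Then for every $x\in A^{-1}_{-\infty}$, $$\big\|d(\hat p_n(\cdot\mid T(x)),p(\cdot\mid x))\big\|_{L,k}\le c_{T(x)}+\|\mathrm{conf}(T(x))\|_{L,r}.$$
   Context: Notation. $A$ is a finite alphabet. For $k\ge0$, $A^{-1}_{-k}$ is the set of strings $w=w_{-k}\cdots w_{-1}$ of length $k$ (for $k=0$ the empty string $e$); $A^{-1}_{-\infty}$ is the set of left-infinite sequences $x=\cdots x_{-2}x_{-1}$; $A^*=A^{-1}_{-\infty}\cup\bigcup_{k\ge0}A^{-1}_{-k}$. $|w|$ is the length and $w^{-1}_{-k}=w_{-k}\cdots w_{-1}$ the suffix of length $k$. $w\preceq w'$ ($w'\succeq w$) means $w$ is a suffix of $w'$. For nonempty $w$, $\mathrm{par}(w)=w_{-|w|+1}\cdots w_{-1}$. A tree is a set $\widetilde T\subseteq A^*$ containing $e$ and the parent of each of its nonempty elements; a leaf is an element that is the parent of no element; $\widetilde T$ is complete if every non-leaf node has exactly $|A|$ children. For a tree $\widetilde T$ and $x\in A^{-1}_{-\infty}$, $K_{\widetilde T}(x)=\sup\{k:x^{-1}_{-k}\in\widetilde T\}$ and $\widetilde T(x)=x^{-1}_{-K_{\widetilde T}(x)}$. $\Delta^A$ is the set of probability distributions on $A$. For $v\in\mathbb R^L$, $\|v\|_{L,q}=(\frac1L\sum_\ell|v_\ell|^q)^{1/q}$ ($1\le q<\infty$), $\|v\|_{L,\infty}=\max_\ell|v_\ell|$.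 Model. For $\ell=1,\dots,L$, $X(\ell)$ is a stationary ergodic $A$-valued process with transition probabilities $p_\ell(a\mid x)=\Pr(X_0(\ell)=a\mid X^{-1}_{-\infty}(\ell)=x)$; $p(\cdot\mid x)=(p_\ell(\cdot\mid x))_\ell$, and for $z\in(A^{-1}_{-\infty})^L$, $p(\cdot\mid z)=(p_\ell(\cdot\mid z(\ell)))_\ell$. One observes $X_1^n(\ell)$ for each $\ell$. $N_{j,\ell}(w)$ is the number of occurrences of the finite string $w$ as a consecutive block in $X_1^j(\ell)$ (0 for infinite $w$). If $\min_\ell N_{n-1,\ell}(w)>0$: $\hat p_{n,\ell}(a\mid w)=N_{n,\ell}(wa)/N_{n-1,\ell}(w)$ and $\bar p_{n,\ell}(a\mid w)=\frac{1}{N_{n-1,\ell}(w)}\sum_{i=|w|+1}^{n}\mathbf 1\{X^{i-1}_{i-|w|}(\ell)=w\}p_\ell(a\mid X^{i-1}_{-\infty}(\ell))$; otherwise both equal $1/|A|$. Metrics $d_\ell:\Delta^A\times\Delta^A\to[0,1]$; $d(q,q')=(d_\ell(q_\ell,q'_\ell))_{\ell}$ for families of distributions; $\hat p_n(\cdot|w)=(\hat p_{n,\ell}(\cdot|w))_\ell$, similarly $\bar p_n$. Confidence radii $\mathrm{conf}(w)=(\mathrm{conf}_\ell(w))_{\ell=1}^L$, $w\in A^*$. Approximation error: $c_w=\sup\{\|d(p(\cdot\mid z),\bar p_n(\cdot\mid w))\|_{L,k}:z\in(A^{-1}_{-\infty})^L,\ z(\ell)\succeq w\ \forall\ell\}$.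 The oracle tree $T$ is a minimizer over finite complete trees $\widetilde T$ of $\sup_{x\in A^{-1}_{-\infty}}\big(c_{\widetilde T(x)}+\|\mathrm{conf}(\widetilde T(x))\|_{L,r}\big)$. Event $\mathrm{Good}_m$: for all $w\in A^*$ with $\min_\ell N_{n-1,\ell}(w)>0$, $\|(d_\ell(\bar p_{n,\ell}(\cdot|w),\hat p_{n,\ell}(\cdot|w))/\mathrm{conf}_\ell(w))_\ell\|_{L,m}\le1$. Condition AGCT: the setting holds with $0\le\mathrm{conf}_\ell(w)\le1$, $\mathrm{conf}_\ell(w)\le\mathrm{conf}_\ell(w')$ whenever $w\preceq w'$, and positive extended integers $k,r,m$ with either ($k\le m$, $r\ge km/(m-k)$) or $k\le r=m=\infty$. *)

theory Defs
  imports Complex_Main "HOL-Library.Extended_Nat"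
begin

text \<open>A finite string w = w_{-k} ... w_{-1} is the list [w_{-1}, w_{-2}, ..., w_{-k}]
  (most recent symbol first). Hence "w is a suffix of w'" becomes "w is a list prefix of w'",
  par(w) = butlast w, and the string w a (a appended on the right) is a # w.
  A left-infinite sequence x = ... x_{-2} x_{-1} is a function x :: nat => 'a with x i = x_{-(i+1)}.
  The processes are indexed by l in {1..L}; the (two-sided) realisation of process l is
  X l :: int => 'a, the observed sample being X l 1, ..., X l n and X l t for t <= 0 the infinite past.\<close>

datatype 'a str = Fin "'a list" | Inf "nat \<Rightarrow> 'a"

definition extends :: "(nat \<Rightarrow> 'a) \<Rightarrow> 'a list \<Rightarrow> bool" where
  "extends x w \<longleftrightarrow> (\<forall>i<length w. x i = w ! i)"

fun str_suffix :: "'a str \<Rightarrow> 'a str \<Rightarrow> bool" where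
  "str_suffix (Fin w) (Fin w') = (\<exists>u. w' = w @ u)"
| "str_suffix (Fin w) (Inf x) = extends x w"
| "str_suffix (Inf x) (Fin w) = False"
| "str_suffix (Inf x) (Inf y) = (x = y)"

definition lnorm :: "nat \<Rightarrow> enat \<Rightarrow> (nat \<Rightarrow> real) \<Rightarrow> real" where
  "lnorm L q v = (case q of
      \<infinity> \<Rightarrow> Max ((\<lambda>l. \<bar>v l\<bar>) ` {1..L})
    | enat q' \<Rightarrow> ((\<Sum>l\<in>{1..L}. \<bar>v l\<bar> ^ q') / real L) powr (1 / real q'))"

definition prob_dist :: "('a::finite \<Rightarrow> real) \<Rightarrow> bool" where
  "prob_dist q \<longleftrightarrow> (\<forall>a. 0 \<le> q a) \<and> sum q UNIV = 1"

definition simplex_metric01 :: "(('a::finite \<Rightarrow> real) \<Rightarrow> ('a \<Rightarrow> real) \<Rightarrow> real) \<Rightarrow> bool" where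
  "simplex_metric01 dl \<longleftrightarrow>
     (\<forall>q q'. prob_dist q \<and> prob_dist q' \<longrightarrow>
        0 \<le> dl q q' \<and> dl q q' \<le> 1 \<and> (dl q q' = 0 \<longleftrightarrow> q = q') \<and> dl q q' = dl q' q) \<and>
     (\<forall>q q' q''. prob_dist q \<and> prob_dist q' \<and> prob_dist q'' \<longrightarrow>
        dl q q'' \<le> dl q q' + dl q' q'')"

definition Nocc :: "(int \<Rightarrow> 'a) \<Rightarrow> int \<Rightarrow> 'a list \<Rightarrow> nat" where
  "Nocc s j w = card {t::int. int (length w) \<le> t \<and> t \<le> j \<and>
                               (\<forall>i<length w. s (t - int i) = w ! i)}"

definition past :: "(int \<Rightarrow> 'a) \<Rightarrow> int \<Rightarrow> (nat \<Rightarrow> 'a)" where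
  "past s t = (\<lambda>j. s (t - 1 - int j))"

definition allpos :: "nat \<Rightarrow> (nat \<Rightarrow> int \<Rightarrow> 'a) \<Rightarrow> nat \<Rightarrow> 'a list \<Rightarrow> bool" where
  "allpos L X n w \<longleftrightarrow> (\<forall>l\<in>{1..L}. 0 < Nocc (X l) (int n - 1) w)"

definition phat :: "nat \<Rightarrow> (nat \<Rightarrow> int \<Rightarrow> 'a::finite) \<Rightarrow> nat \<Rightarrow> nat \<Rightarrow> 'a list \<Rightarrow> 'a \<Rightarrow> real" where
  "phat L X n l w a = (if allpos L X n w
      then real (Nocc (X l) (int n) (a # w)) / real (Nocc (X l) (int n - 1) w)
      else 1 / real (card (UNIV :: 'a set)))"

definition pbar :: "nat \<Rightarrow> (nat \<Rightarrow> int \<Rightarrow> 'a::finite) \<Rightarrow> (nat \<Rightarrow> (nat \<Rightarrow> 'a) \<Rightarrow> 'a \<Rightarrow> real)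
                    \<Rightarrow> nat \<Rightarrow> nat \<Rightarrow> 'a list \<Rightarrow> 'a \<Rightarrow> real" where
  "pbar L X p n l w a = (if allpos L X n w
      then (\<Sum>i\<in>{int (length w) + 1 .. int n}.
              (if (\<forall>j<length w. X l (i - 1 - int j) = w ! j) then p l (past (X l) i) a else 0))
           / real (Nocc (X l) (int n - 1) w)
      else 1 / real (card (UNIV :: 'a set)))"

definition capp :: "nat \<Rightarrow> enat \<Rightarrow> (nat \<Rightarrow> ('a::finite \<Rightarrow> real) \<Rightarrow> ('a \<Rightarrow> real) \<Rightarrow> real)
     \<Rightarrow> (nat \<Rightarrow> (nat \<Rightarrow> 'a) \<Rightarrow> 'a \<Rightarrow> real) \<Rightarrow> (nat \<Rightarrow> int \<Rightarrow> 'a) \<Rightarrow> nat \<Rightarrow> 'a list \<Rightarrow> real" where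
  "capp L k d p X n w = Sup {lnorm L k (\<lambda>l. d l (p l (z l)) (pbar L X p n l w)) | z.
                              \<forall>l\<in>{1..L}. extends (z l) w}"

definition is_tree :: "'a list set \<Rightarrow> bool" where
  "is_tree T \<longleftrightarrow> [] \<in> T \<and> (\<forall>w\<in>T. w \<noteq> [] \<longrightarrow> butlast w \<in> T)"

definition children :: "'a list set \<Rightarrow> 'a list \<Rightarrow> 'a list set" where
  "children T u = {w\<in>T. w \<noteq> [] \<and> butlast w = u}"

definition finite_complete_tree :: "'a::finite list set \<Rightarrow> bool" where
  "finite_complete_tree T \<longleftrightarrow> finite T \<and> is_tree T \<and>
     (\<forall>u\<in>T. children T u \<noteq> {} \<longrightarrow> card (children T u) = card (UNIV :: 'a set))"

definition tree_K :: "'a list set \<Rightarrow> (nat \<Rightarrow> 'a) \<Rightarrow> nat" where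
  "tree_K T x = Sup {k. map x [0..<k] \<in> T}"

definition tree_node :: "'a list set \<Rightarrow> (nat \<Rightarrow> 'a) \<Rightarrow> 'a list" where
  "tree_node T x = map x [0..<tree_K T x]"

definition tree_objective :: "nat \<Rightarrow> enat \<Rightarrow> enat \<Rightarrow> (nat \<Rightarrow> ('a::finite \<Rightarrow> real) \<Rightarrow> ('a \<Rightarrow> real) \<Rightarrow> real)
     \<Rightarrow> (nat \<Rightarrow> (nat \<Rightarrow> 'a) \<Rightarrow> 'a \<Rightarrow> real) \<Rightarrow> (nat \<Rightarrow> int \<Rightarrow> 'a) \<Rightarrow> nat
     \<Rightarrow> (nat \<Rightarrow> 'a str \<Rightarrow> real) \<Rightarrow> 'a list set \<Rightarrow> real" where
  "tree_objective L k r d p X n conf T =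
     Sup (range (\<lambda>x. capp L k d p X n (tree_node T x)
                     + lnorm L r (\<lambda>l. conf l (Fin (tree_node T x)))))"

definition is_optimal_tree :: "nat \<Rightarrow> enat \<Rightarrow> enat \<Rightarrow> (nat \<Rightarrow> ('a::finite \<Rightarrow> real) \<Rightarrow> ('a \<Rightarrow> real) \<Rightarrow> real)
     \<Rightarrow> (nat \<Rightarrow> (nat \<Rightarrow> 'a) \<Rightarrow> 'a \<Rightarrow> real) \<Rightarrow> (nat \<Rightarrow> int \<Rightarrow> 'a) \<Rightarrow> nat
     \<Rightarrow> (nat \<Rightarrow> 'a str \<Rightarrow> real) \<Rightarrow> 'a list set \<Rightarrow> bool" where
  "is_optimal_tree L k r d p X n conf T \<longleftrightarrow> finite_complete_tree T \<and>
     (\<forall>T'. finite_complete_tree T' \<longrightarrow>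
        tree_objective L k r d p X n conf T \<le> tree_objective L k r d p X n conf T')"

text \<open>event Good_m (ratio d/conf read as +infinity if conf = 0 < d, and 0/0 = 0)\<close>
definition Good :: "nat \<Rightarrow> enat \<Rightarrow> (nat \<Rightarrow> ('a::finite \<Rightarrow> real) \<Rightarrow> ('a \<Rightarrow> real) \<Rightarrow> real)
     \<Rightarrow> (nat \<Rightarrow> (nat \<Rightarrow> 'a) \<Rightarrow> 'a \<Rightarrow> real) \<Rightarrow> (nat \<Rightarrow> int \<Rightarrow> 'a) \<Rightarrow> nat
     \<Rightarrow> (nat \<Rightarrow> 'a str \<Rightarrow> real) \<Rightarrow> bool" where
  "Good L m d p X n conf \<longleftrightarrow> (\<forall>w. allpos L X n w \<longrightarrow>
      (\<forall>l\<in>{1..L}. conf l (Fin w) = 0 \<longrightarrow> d l (pbar L X p n l w) (phat L X n l w) = 0) \<and>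
      lnorm L m (\<lambda>l. d l (pbar L X p n l w) (phat L X n l w) / conf l (Fin w)) \<le> 1)"

text \<open>exponent condition of AGCT: positive extended integers k r m with
  (k <= m and r >= km/(m-k)) or k <= r = m = infinity. In the first alternative k, m are finite,
  and km/(m-k) = +infinity when k = m.\<close>
definition agct_exponents :: "enat \<Rightarrow> enat \<Rightarrow> enat \<Rightarrow> bool" where
  "agct_exponents k r m \<longleftrightarrow> 1 \<le> k \<and> 1 \<le> r \<and> 1 \<le> m \<and>
     ((\<exists>k' m'. k = enat k' \<and> m = enat m' \<and> k' \<le> m' \<and>
         (k' = m' \<longrightarrow> r = \<infinity>) \<and>
         (k' < m' \<longrightarrow> (case r of \<infinity> \<Rightarrow> True
                          | enat r' \<Rightarrow> real k' * real m' / real (m' - k') \<le> real r')))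
      \<or> (k \<le> r \<and> r = \<infinity> \<and> m = \<infinity>))"

end

theory Submission
  imports Defs "HOL-Analysis.Convex"
begin

(* For each l, the triangle inequality through the averaged law pbar gives
   d(phat, p(.|x)) <= d(phat, pbar) + d(pbar, p(.|x)), and Minkowski's inequality for the
   normalised norms ||.||_{L,k} splits the error accordingly.  The second part is at most c_w,
   since x itself is an admissible past in the supremum defining c_w.  On Good_m the first part
   factors as (d/conf) * conf with ||d/conf||_{L,m} <= 1, so Hoelder's inequality
   ||f g||_k <= ||f||_m ||g||_r, valid under the AGCT condition 1/k >= 1/m + 1/r, bounds it by
   ||conf||_{L,r}.  Minkowski and Hoelder follow from convexity of t^q and a three-term weighted
   AM-GM inequality. *)

lemma lnorm_enat:
  "0 < q \<Longrightarrow> lnorm L (enat q) v = root q ((\<Sum>l\<in>{1..L}. \<bar>v l\<bar> ^ q) / real L)"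
  by (simp add: lnorm_def root_powr_inverse sum_nonneg)

lemma lnorm_enat_le_iff:
  assumes "0 < q" "0 \<le> c"
  shows "lnorm L (enat q) v \<le> c \<longleftrightarrow> (\<Sum>l\<in>{1..L}. \<bar>v l\<bar> ^ q) / real L \<le> c ^ q"
  using assms real_root_le_iff[of q _ "c ^ q"] by (simp add: lnorm_enat real_root_power_cancel)

lemma lnorm_enat_le_one_iff:
  "1 \<le> L \<Longrightarrow> 0 < q \<Longrightarrow> lnorm L (enat q) v \<le> 1 \<longleftrightarrow> (\<Sum>l\<in>{1..L}. \<bar>v l\<bar> ^ q) \<le> real L"
  by (simp add: lnorm_enat_le_iff)

lemma abs_le_lnorm_infinity: "l \<in> {1..L} \<Longrightarrow> \<bar>v l\<bar> \<le> lnorm L \<infinity> v"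
  by (simp add: lnorm_def)

lemma lnorm_infinity_le_iff:
  "1 \<le> L \<Longrightarrow> lnorm L \<infinity> v \<le> c \<longleftrightarrow> (\<forall>l\<in>{1..L}. \<bar>v l\<bar> \<le> c)"
  by (simp add: lnorm_def)

lemma lnorm_nonneg: "1 \<le> L \<Longrightarrow> 0 \<le> lnorm L q v"
proof (cases q)
  case infinity
  moreover assume "1 \<le> L"
  ultimately show ?thesis using abs_le_lnorm_infinity[of 1 L v] by simp
qed (simp add: lnorm_def)

lemma lnorm_cong: "(\<And>l. l \<in> {1..L} \<Longrightarrow> v l = v' l) \<Longrightarrow> lnorm L q v = lnorm L q v'"
proof -
  assume eq: "\<And>l. l \<in> {1..L} \<Longrightarrow> v l = v' l"
  have "(\<lambda>l. \<bar>v l\<bar>) ` {1..L} = (\<lambda>l. \<bar>v' l\<bar>) ` {1..L}"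
    using eq by (intro image_cong) auto
  moreover have "(\<Sum>l\<in>{1..L}. \<bar>v l\<bar> ^ q') = (\<Sum>l\<in>{1..L}. \<bar>v' l\<bar> ^ q')" for q'
    using eq by (intro sum.cong) auto
  ultimately show ?thesis by (simp add: lnorm_def split: enat.split)
qed

lemma lnorm_le_const:
  assumes "1 \<le> L" "1 \<le> q" and bound: "\<And>l. l \<in> {1..L} \<Longrightarrow> \<bar>v l\<bar> \<le> c"
  shows "lnorm L q v \<le> c"
proof (cases q)
  case (enat q')
  have "0 \<le> c" using bound[of 1] assms(1) by auto
  have "(\<Sum>l\<in>{1..L}. \<bar>v l\<bar> ^ q') \<le> (\<Sum>l\<in>{1..L}. c ^ q')"
    using bound by (intro sum_mono power_mono) auto
  then show ?thesis
    using enat assms(1,2) \<open>0 \<le> c\<close> by (simp add: lnorm_enat_le_iff one_enat_def field_simps)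
qed (use assms lnorm_infinity_le_iff in auto)

lemma lnorm_mono:
  assumes L: "1 \<le> L" and "1 \<le> q" and le: "\<And>l. l \<in> {1..L} \<Longrightarrow> \<bar>a l\<bar> \<le> \<bar>b l\<bar>"
  shows "lnorm L q a \<le> lnorm L q b"
proof (cases q)
  case (enat q')
  then have "0 < q'" using assms(2) by (simp add: one_enat_def)
  note le_iff = lnorm_enat_le_iff[OF this lnorm_nonneg[OF L, of q b], of L]
  have "(\<Sum>l\<in>{1..L}. \<bar>a l\<bar> ^ q') / real L \<le> (\<Sum>l\<in>{1..L}. \<bar>b l\<bar> ^ q') / real L"
    using le by (intro divide_right_mono sum_mono power_mono) auto
  also have "\<dots> \<le> lnorm L q b ^ q'"
    using le_iff[of b] enat by simp
  finally show ?thesis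
    using le_iff[of a] enat by simp
next
  case infinity
  have "\<bar>a l\<bar> \<le> lnorm L \<infinity> b" if "l \<in> {1..L}" for l
    using le[OF that] abs_le_lnorm_infinity[OF that, of b] by linarith
  then show ?thesis
    using infinity lnorm_infinity_le_iff[OF L] by simp
qed

lemma lnorm_le_zero_imp_zero:
  assumes "1 \<le> L" "1 \<le> q" "lnorm L q v \<le> 0" "l \<in> {1..L}"
  shows "v l = 0"
proof (cases q)
  case (enat q')
  then have "0 < q'" using assms(2) by (simp add: one_enat_def)
  have "\<bar>v l\<bar> ^ q' \<le> (\<Sum>l\<in>{1..L}. \<bar>v l\<bar> ^ q')"
    using assms(4) by (intro member_le_sum) auto
  also have "\<dots> \<le> 0"
    using assms(1,3) enat \<open>0 < q'\<close> by (simp add: lnorm_enat_le_iff divide_le_0_iff power_0_left)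
  finally show ?thesis
    by (metis abs_eq_0 abs_ge_zero order_antisym zero_le_power power_eq_0_iff)
qed (use assms lnorm_infinity_le_iff in auto)

lemma lnorm_scale:
  assumes "1 \<le> L" "1 \<le> q" "0 \<le> c"
  shows "lnorm L q (\<lambda>l. c * v l) = c * lnorm L q v"
proof (cases q)
  case (enat q')
  then have "0 < q'" using assms(2) by (simp add: one_enat_def)
  then show ?thesis
    using enat assms
    by (simp add: lnorm_enat abs_mult power_mult_distrib real_root_mult real_root_power_cancel
        flip: sum_distrib_left times_divide_eq_right)
next
  case infinity
  have "c * Max ((\<lambda>l. \<bar>v l\<bar>) ` {1..L}) = Max ((*) c ` (\<lambda>l. \<bar>v l\<bar>) ` {1..L})"
    using assms by (intro mono_Max_commute) (auto simp: mono_def mult_left_mono)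
  then show ?thesis
    using infinity assms by (simp add: lnorm_def abs_mult image_image)
qed

lemma lnorm_le_of_rescaled:
  assumes "1 \<le> L" "1 \<le> q" "0 < c" "lnorm L q (\<lambda>l. v l / c) \<le> 1"
  shows "lnorm L q v \<le> c"
proof -
  have "lnorm L q v = c * lnorm L q (\<lambda>l. v l / c)"
    using assms lnorm_scale[of L q c "\<lambda>l. v l / c"] by simp
  also have "\<dots> \<le> c" using assms by simp
  finally show ?thesis .
qed

lemma lnorm_normalize:
  assumes "1 \<le> L" "1 \<le> q" "0 < lnorm L q v"
  shows "lnorm L q (\<lambda>l. v l / lnorm L q v) = 1"
  using assms lnorm_scale[of L q "1 / lnorm L q v" v] by simp

lemma weighted_arith_geom_mean3:
  fixes a b \<alpha> \<beta> :: real
  assumes "0 \<le> a" "0 \<le> b" "0 \<le> \<alpha>" "0 \<le> \<beta>" "\<alpha> + \<beta> \<le> 1"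
  shows "a powr \<alpha> * b powr \<beta> \<le> \<alpha> * a + \<beta> * b + (1 - \<alpha> - \<beta>)"
proof -
  consider "a = 0 \<or> b = 0" | "\<alpha> = 0" "\<beta> = 0" | "0 < a" "0 < b" "0 < \<alpha> + \<beta>"
    using assms by fastforce
  then show ?thesis
  proof cases
    case 1
    then show ?thesis using assms by (auto intro: add_nonneg_nonneg)
  next
    case 2
    then show ?thesis by simp
  next
    case 3
    let ?s = "\<alpha> + \<beta>"
    define c where "c = (\<alpha> / ?s) * a + (\<beta> / ?s) * b"
    have c: "c = (\<alpha> * a + \<beta> * b) / ?s"
      unfolding c_def by (simp add: add_divide_distrib)
    have "0 < \<alpha> * a + \<beta> * b"
      using 3 assms by (cases "\<alpha> = 0") (auto intro: add_pos_nonneg)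
    then have "0 < c"
      unfolding c using 3 by simp
    have "a powr \<alpha> * b powr \<beta> = (a powr (\<alpha> / ?s) * b powr (\<beta> / ?s)) powr ?s"
      using 3 by (simp add: powr_mult powr_powr)
    also have "\<dots> \<le> c powr ?s"
      unfolding c_def using 3 assms
      by (intro powr_mono2 Youngs_inequality_0) (auto simp flip: add_divide_distrib)
    also have "\<dots> = c powr ?s * 1 powr (1 - ?s)" by simp
    also have "\<dots> \<le> ?s * c + (1 - ?s) * 1"
      using \<open>0 < c\<close> assms by (intro Youngs_inequality_0) auto
    also have "\<dots> = \<alpha> * a + \<beta> * b + (1 - \<alpha> - \<beta>)"
      unfolding c using 3 by simp
    finally show ?thesis .
  qed
qed

lemma convex_on_power_nonneg: "convex_on {0::real..} (\<lambda>x. x ^ n)"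
  using convex_power_even[of n] convex_power_odd[of n] convex_on_subset by blast

lemma sum_le_card_of_weighted_bound:
  fixes w a b :: "'i \<Rightarrow> real"
  assumes bound: "\<And>i. i \<in> I \<Longrightarrow> w i \<le> \<alpha> * a i + \<beta> * b i + (1 - \<alpha> - \<beta>)"
    and "0 \<le> \<alpha>" "0 \<le> \<beta>" "sum a I \<le> card I" "sum b I \<le> card I"
  shows "sum w I \<le> card I"
proof -
  have "sum w I \<le> \<alpha> * sum a I + \<beta> * sum b I + card I * (1 - \<alpha> - \<beta>)"
    using sum_mono[OF bound] by (simp add: sum.distrib sum_distrib_left)
  also have "\<dots> \<le> \<alpha> * card I + \<beta> * card I + card I * (1 - \<alpha> - \<beta>)"
    using assms by (intro add_mono mult_left_mono) auto
  finally show ?thesis by (simp add: algebra_simps)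
qed

lemma abs_add_divide_power_le:
  fixes x y A B :: real
  assumes "0 < A" "0 < B"
  shows "\<bar>(x + y) / (A + B)\<bar> ^ n \<le> A / (A + B) * \<bar>x / A\<bar> ^ n + B / (A + B) * \<bar>y / B\<bar> ^ n"
proof -
  let ?t = "B / (A + B)"
  have t: "0 \<le> ?t" "?t \<le> 1" "1 - ?t = A / (A + B)"
    using assms by (simp_all add: field_simps)
  then have "(1 - ?t) * \<bar>x / A\<bar> + ?t * \<bar>y / B\<bar> = (\<bar>x\<bar> + \<bar>y\<bar>) / (A + B)"
    using assms by (simp add: add_divide_distrib)
  then have "\<bar>(x + y) / (A + B)\<bar> \<le> (1 - ?t) * \<bar>x / A\<bar> + ?t * \<bar>y / B\<bar>"
    using assms abs_triangle_ineq[of x y] by (simp add: divide_right_mono)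
  then have "\<bar>(x + y) / (A + B)\<bar> ^ n \<le> ((1 - ?t) * \<bar>x / A\<bar> + ?t * \<bar>y / B\<bar>) ^ n"
    by (intro power_mono) auto
  also have "\<dots> \<le> (1 - ?t) * \<bar>x / A\<bar> ^ n + ?t * \<bar>y / B\<bar> ^ n"
    using convex_onD[OF convex_on_power_nonneg, of ?t "\<bar>x / A\<bar>" "\<bar>y / B\<bar>" n] t by simp
  finally show ?thesis
    using t by simp
qed

lemma lnorm_enat_add_le:
  assumes L: "1 \<le> L" and "0 < q"
  shows "lnorm L (enat q) (\<lambda>l. u l + v l) \<le> lnorm L (enat q) u + lnorm L (enat q) v"
proof -
  have q: "1 \<le> enat q" using \<open>0 < q\<close> by (simp add: one_enat_def)
  define A B where "A = lnorm L (enat q) u" and "B = lnorm L (enat q) v"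
  have "0 \<le> A" "0 \<le> B" unfolding A_def B_def using lnorm_nonneg[OF L] by auto
  then consider "A = 0" | "B = 0" | "0 < A" "0 < B" by fastforce
  then show ?thesis
  proof cases
    case 1
    then have "lnorm L (enat q) (\<lambda>l. u l + v l) = B"
      unfolding B_def using lnorm_le_zero_imp_zero[OF L q, of u] A_def by (intro lnorm_cong) simp
    then show ?thesis using 1 A_def B_def by simp
  next
    case 2
    then have "lnorm L (enat q) (\<lambda>l. u l + v l) = A"
      unfolding A_def using lnorm_le_zero_imp_zero[OF L q, of v] B_def by (intro lnorm_cong) simp
    then show ?thesis using 2 A_def B_def by simp
  next
    case 3
    let ?a = "\<lambda>l. \<bar>u l / A\<bar> ^ q" and ?b = "\<lambda>l. \<bar>v l / B\<bar> ^ q"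
    have "lnorm L (enat q) (\<lambda>l. u l / A) \<le> 1" "lnorm L (enat q) (\<lambda>l. v l / B) \<le> 1"
      using 3 lnorm_normalize[OF L q] unfolding A_def B_def by simp_all
    then have sums: "sum ?a {1..L} \<le> card {1..L}" "sum ?b {1..L} \<le> card {1..L}"
      using \<open>0 < q\<close> lnorm_enat_le_one_iff[OF L] by simp_all
    have "1 - A / (A + B) - B / (A + B) = 0"
      using 3 by (simp add: field_simps)
    have "(\<Sum>l\<in>{1..L}. \<bar>(u l + v l) / (A + B)\<bar> ^ q) \<le> card {1..L}"
      by (rule sum_le_card_of_weighted_bound[where \<alpha> = "A / (A + B)" and \<beta> = "B / (A + B)", OF _ _ _ sums])
        (use abs_add_divide_power_le[OF 3] 3 \<open>1 - A / (A + B) - B / (A + B) = 0\<close> in simp_all)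
    then have "lnorm L (enat q) (\<lambda>l. (u l + v l) / (A + B)) \<le> 1"
      using \<open>0 < q\<close> lnorm_enat_le_one_iff[OF L] by simp
    then show ?thesis
      using 3 lnorm_le_of_rescaled[OF L q] unfolding A_def B_def by simp
  qed
qed

lemma lnorm_add_le:
  assumes L: "1 \<le> L" and q: "1 \<le> q"
  shows "lnorm L q (\<lambda>l. u l + v l) \<le> lnorm L q u + lnorm L q v"
proof (cases q)
  case infinity
  have "\<bar>u l + v l\<bar> \<le> lnorm L \<infinity> u + lnorm L \<infinity> v" if "l \<in> {1..L}" for l
    using abs_triangle_ineq[of "u l" "v l"] abs_le_lnorm_infinity[OF that, of u]
      abs_le_lnorm_infinity[OF that, of v] by linarith
  then have "lnorm L q (\<lambda>l. u l + v l) \<le> lnorm L \<infinity> u + lnorm L \<infinity> v"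
    by (rule lnorm_le_const[OF L q])
  then show ?thesis
    using infinity by simp
next
  case (enat q')
  then show ?thesis
    using q lnorm_enat_add_le[OF L, of q'] by (simp add: one_enat_def)
qed

lemma agct_exponents_cases:
  assumes "agct_exponents k r m"
  obtains (sup) "1 \<le> k" "m = \<infinity>" "r = \<infinity>"
    | (power_mean) k' m' where "k = enat k'" "m = enat m'" "r = \<infinity>" "1 \<le> k'" "k' \<le> m'"
    | (holder) k' m' r' where "k = enat k'" "m = enat m'" "r = enat r'" "1 \<le> k'" "k' < m'"
        "1 \<le> r'" "real k' / real m' + real k' / real r' \<le> 1"
proof -
  from assms consider "1 \<le> k" "m = \<infinity>" "r = \<infinity>"
    | k' m' where "k = enat k'" "m = enat m'" "1 \<le> k'" "k' \<le> m'" "1 \<le> r"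
        "k' = m' \<longrightarrow> r = \<infinity>"
        "k' < m' \<longrightarrow> (case r of \<infinity> \<Rightarrow> True | enat r' \<Rightarrow> real k' * real m' / real (m' - k') \<le> real r')"
    unfolding agct_exponents_def by (auto simp: one_enat_def)
  then show thesis
  proof cases
    case 1
    then show thesis by (rule sup)
  next
    case (2 k' m')
    show thesis
    proof (cases r)
      case infinity
      show thesis by (rule power_mean[of k' m']) (use 2 infinity in auto)
    next
      case (enat r')
      with 2 have "k' < m'" "1 \<le> r'" by (auto simp: one_enat_def)
      with 2 enat have "real k' * real m' \<le> real r' * (real m' - real k')"
        by (simp add: pos_divide_le_eq)
      then have "real k' * real r' + real k' * real m' \<le> real m' * real r'"
        by (simp add: algebra_simps)
      then have kmr: "real k' / real m' + real k' / real r' \<le> 1"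
        using \<open>k' < m'\<close> \<open>1 \<le> r'\<close> by (simp add: field_simps)
      show thesis by (rule holder[of k' m' r']) (use 2 enat \<open>k' < m'\<close> \<open>1 \<le> r'\<close> kmr in auto)
    qed
  qed
qed

lemma powr_power_divide:
  fixes x :: real
  assumes "0 \<le> x" "0 < k" "0 < m"
  shows "(x ^ m) powr (real k / real m) = x ^ k"
proof (cases "x = 0")
  case False
  then have "0 < x" using assms(1) by simp
  then show ?thesis
    using assms(3) by (simp add: powr_realpow[symmetric] powr_powr)
qed (use assms in \<open>simp add: power_0_left\<close>)

(* g enters only through |g|^k \<le> b powr \<beta> with \<Sum>b \<le> L: take b = |g|^r, \<beta> = k/r if the
   normalised r-norm of g is at most 1, and b = 1, \<beta> = 0 if |g| \<le> 1. *)
lemma lnorm_enat_mult_le_one: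
  fixes b :: "nat \<Rightarrow> real"
  assumes L: "1 \<le> L" and km: "1 \<le> k" "k \<le> m" and f: "lnorm L (enat m) f \<le> 1"
    and \<beta>: "0 \<le> \<beta>" "real k / real m + \<beta> \<le> 1"
    and b: "\<And>l. 0 \<le> b l" "sum b {1..L} \<le> card {1..L}"
    and gb: "\<And>l. l \<in> {1..L} \<Longrightarrow> \<bar>g l\<bar> ^ k \<le> b l powr \<beta>"
  shows "lnorm L (enat k) (\<lambda>l. f l * g l) \<le> 1"
proof -
  let ?a = "\<lambda>l. \<bar>f l\<bar> ^ m"
  have fa: "sum ?a {1..L} \<le> card {1..L}"
    using f km lnorm_enat_le_one_iff[OF L] by simp
  have bound: "\<bar>f l * g l\<bar> ^ k \<le> real k / real m * ?a l + \<beta> * b l + (1 - real k / real m - \<beta>)"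
    if "l \<in> {1..L}" for l
  proof -
    have "\<bar>f l * g l\<bar> ^ k = ?a l powr (real k / real m) * \<bar>g l\<bar> ^ k"
      using km by (simp add: abs_mult power_mult_distrib powr_power_divide)
    also have "\<dots> \<le> ?a l powr (real k / real m) * b l powr \<beta>"
      using gb[OF that] by (intro mult_left_mono) auto
    also have "\<dots> \<le> real k / real m * ?a l + \<beta> * b l + (1 - real k / real m - \<beta>)"
      by (rule weighted_arith_geom_mean3) (use km \<beta> b in auto)
    finally show ?thesis .
  qed
  have "(\<Sum>l\<in>{1..L}. \<bar>f l * g l\<bar> ^ k) \<le> card {1..L}"
    by (rule sum_le_card_of_weighted_bound[where a = ?a and b = b, OF bound _ \<beta>(1) fa b(2)])
      (use km in auto)
  then show ?thesis
    using km lnorm_enat_le_one_iff[OF L] by simp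
qed

lemma lnorm_mult_le_one:
  assumes L: "1 \<le> L" and exps: "agct_exponents k r m"
    and f: "lnorm L m f \<le> 1" and g: "lnorm L r g \<le> 1"
  shows "lnorm L k (\<lambda>l. f l * g l) \<le> 1"
  using exps
proof (cases rule: agct_exponents_cases)
  case sup
  have "\<bar>f l * g l\<bar> \<le> 1" if "l \<in> {1..L}" for l
    using f g sup lnorm_infinity_le_iff[OF L] that by (simp add: abs_mult mult_le_one)
  then show ?thesis by (rule lnorm_le_const[OF L \<open>1 \<le> k\<close>])
next
  case (power_mean k' m')
  have "\<bar>g l\<bar> ^ k' \<le> 1 powr 0" if "l \<in> {1..L}" for l
    using g power_mean lnorm_infinity_le_iff[OF L] that by (simp add: power_le_one)
  moreover have "real k' / real m' \<le> 1"
    using power_mean by simp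
  ultimately show ?thesis
    unfolding power_mean(1)
    by (intro lnorm_enat_mult_le_one[where \<beta> = 0 and b = "\<lambda>_. 1", OF L]) (use f power_mean in auto)
next
  case (holder k' m' r')
  have "sum (\<lambda>l. \<bar>g l\<bar> ^ r') {1..L} \<le> card {1..L}"
    using g holder lnorm_enat_le_one_iff[OF L] by simp
  moreover have "\<bar>g l\<bar> ^ k' \<le> (\<bar>g l\<bar> ^ r') powr (real k' / real r')" for l
    using holder by (simp add: powr_power_divide)
  ultimately show ?thesis
    unfolding holder(1)
    by (intro lnorm_enat_mult_le_one[where \<beta> = "real k' / real r'" and b = "\<lambda>l. \<bar>g l\<bar> ^ r'", OF L])
      (use f holder in auto)
qed

lemma lnorm_mult_le:
  assumes L: "1 \<le> L" and exps: "agct_exponents k r m"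
  shows "lnorm L k (\<lambda>l. f l * g l) \<le> lnorm L m f * lnorm L r g"
proof -
  have k: "1 \<le> k" and m: "1 \<le> m" and r: "1 \<le> r"
    using exps by (simp_all add: agct_exponents_def)
  define F G where "F = lnorm L m f" and "G = lnorm L r g"
  have "0 \<le> F" "0 \<le> G" unfolding F_def G_def by (simp_all add: lnorm_nonneg[OF L])
  then consider "F = 0" | "G = 0" | "0 < F" "0 < G" by fastforce
  then show ?thesis
  proof cases
    case 1
    then have "\<bar>f l * g l\<bar> \<le> 0" if "l \<in> {1..L}" for l
      using lnorm_le_zero_imp_zero[OF L m _ that, of f] F_def by simp
    then show ?thesis using 1 F_def lnorm_le_const[OF L k] by simp
  next
    case 2
    then have "\<bar>f l * g l\<bar> \<le> 0" if "l \<in> {1..L}" for l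
      using lnorm_le_zero_imp_zero[OF L r _ that, of g] G_def by simp
    then show ?thesis using 2 G_def lnorm_le_const[OF L k] by simp
  next
    case 3
    have "lnorm L k (\<lambda>l. (f l / F) * (g l / G)) \<le> 1"
      using 3 lnorm_normalize[OF L m, of f] lnorm_normalize[OF L r, of g] unfolding F_def G_def
      by (intro lnorm_mult_le_one[OF L exps]) simp_all
    then have "lnorm L k (\<lambda>l. f l * g l / (F * G)) \<le> 1"
      by simp
    then show ?thesis
      using 3 lnorm_le_of_rescaled[OF L k] unfolding F_def G_def by simp
  qed
qed

(* The times i <= j preceded by an occurrence of w: N_{j-1}(w) counts them, and phat and pbar
   are averages over them. *)
definition context_times :: "(int \<Rightarrow> 'a) \<Rightarrow> int \<Rightarrow> 'a list \<Rightarrow> int set" where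
  "context_times s j w = {i. int (length w) < i \<and> i \<le> j \<and> (\<forall>k<length w. s (i - 1 - int k) = w ! k)}"

lemma finite_context_times: "finite (context_times s j w)"
  by (rule finite_subset[of _ "{int (length w) + 1..j}"]) (auto simp: context_times_def)

lemma Nocc_eq_card_context_times: "Nocc s (j - 1) w = card (context_times s j w)"
proof -
  have "context_times s j w =
      (\<lambda>t. t + 1) ` {t. int (length w) \<le> t \<and> t \<le> j - 1 \<and> (\<forall>i<length w. s (t - int i) = w ! i)}"
  proof (rule set_eqI)
    fix i
    show "i \<in> context_times s j w \<longleftrightarrow>
        i \<in> (\<lambda>t. t + 1) ` {t. int (length w) \<le> t \<and> t \<le> j - 1 \<and> (\<forall>i<length w. s (t - int i) = w ! i)}"
      by (rule iffI, rule image_eqI[of _ _ "i - 1"]) (auto simp: context_times_def)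
  qed
  then show ?thesis
    unfolding Nocc_def by (simp add: card_image)
qed

lemma Nocc_Cons: "Nocc s j (a # w) = card {i \<in> context_times s j w. s i = a}"
proof -
  have "(\<forall>k<length (a # w). s (i - int k) = (a # w) ! k) \<longleftrightarrow>
        s i = a \<and> (\<forall>k<length w. s (i - 1 - int k) = w ! k)" for i
    by (simp add: All_less_Suc2 algebra_simps)
  then show ?thesis
    unfolding Nocc_def context_times_def by (intro arg_cong[where f = card]) auto
qed

lemma prob_dist_uniform: "prob_dist (\<lambda>_::'a::finite. 1 / real (card (UNIV :: 'a set)))"
  by (simp add: prob_dist_def)

lemma prob_dist_average:
  fixes q :: "'i \<Rightarrow> 'a::finite \<Rightarrow> real"
  assumes "finite C" "C \<noteq> {}" and q: "\<And>i. i \<in> C \<Longrightarrow> prob_dist (q i)"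
  shows "prob_dist (\<lambda>a. (\<Sum>i\<in>C. q i a) / card C)"
proof -
  have "(\<Sum>a\<in>UNIV. \<Sum>i\<in>C. q i a) = (\<Sum>i\<in>C. \<Sum>a\<in>UNIV. q i a)"
    by (rule sum.swap)
  also have "\<dots> = card C"
    using q by (simp add: prob_dist_def)
  finally show ?thesis
    using assms q by (auto simp: prob_dist_def sum_nonneg simp flip: sum_divide_distrib)
qed

lemma prob_dist_point_mass: "prob_dist (\<lambda>a. of_bool (b = a))"
  by (simp add: prob_dist_def)

lemma allpos_context_times_nonempty:
  assumes "allpos L X n w" "l \<in> {1..L}"
  shows "context_times (X l) (int n) w \<noteq> {}"
proof -
  have "0 < Nocc (X l) (int n - 1) w" using assms by (simp add: allpos_def)
  then show ?thesis by (auto simp: Nocc_eq_card_context_times)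
qed

lemma phat_eq_average:
  assumes "allpos L X n w"
  shows "phat L X n l w =
    (\<lambda>a. (\<Sum>i\<in>context_times (X l) (int n) w. of_bool (X l i = a)) / card (context_times (X l) (int n) w))"
proof
  fix a
  have "Nocc (X l) (int n) (a # w) = card (context_times (X l) (int n) w \<inter> {i. X l i = a})"
    by (simp add: Nocc_Cons Int_def conj_commute)
  then show "phat L X n l w a = (\<Sum>i\<in>context_times (X l) (int n) w. of_bool (X l i = a)) /
      card (context_times (X l) (int n) w)"
    using assms by (simp add: phat_def finite_context_times Nocc_eq_card_context_times)
qed

lemma pbar_eq_average:
  assumes "allpos L X n w"
  shows "pbar L X p n l w =
    (\<lambda>a. (\<Sum>i\<in>context_times (X l) (int n) w. p l (past (X l) i) a) / card (context_times (X l) (int n) w))"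
proof
  fix a
  have "{i \<in> {int (length w) + 1..int n}. \<forall>j<length w. X l (i - 1 - int j) = w ! j} =
      context_times (X l) (int n) w"
    by (auto simp: context_times_def)
  then have "(\<Sum>i\<in>{int (length w) + 1..int n}.
        if \<forall>j<length w. X l (i - 1 - int j) = w ! j then p l (past (X l) i) a else 0) =
      (\<Sum>i\<in>context_times (X l) (int n) w. p l (past (X l) i) a)"
    by (simp flip: sum.inter_filter)
  then show "pbar L X p n l w a = (\<Sum>i\<in>context_times (X l) (int n) w. p l (past (X l) i) a) /
      card (context_times (X l) (int n) w)"
    using assms by (simp add: pbar_def Nocc_eq_card_context_times)
qed

lemma prob_dist_phat:
  assumes "l \<in> {1..L}"
  shows "prob_dist (phat L X n l w)"
proof (cases "allpos L X n w")
  case True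
  then show ?thesis
    unfolding phat_eq_average[OF True]
    by (intro prob_dist_average finite_context_times allpos_context_times_nonempty[OF True assms]
        prob_dist_point_mass)
next
  case False
  then have "phat L X n l w = (\<lambda>_. 1 / real (card (UNIV :: 'a set)))"
    by (simp add: fun_eq_iff phat_def)
  then show ?thesis by (simp add: prob_dist_uniform)
qed

lemma prob_dist_pbar:
  assumes "l \<in> {1..L}" and p: "\<And>y. prob_dist (p l y)"
  shows "prob_dist (pbar L X p n l w)"
proof (cases "allpos L X n w")
  case True
  then show ?thesis
    unfolding pbar_eq_average[OF True]
    by (intro prob_dist_average finite_context_times allpos_context_times_nonempty[OF True assms(1)] p)
next
  case False
  then have "pbar L X p n l w = (\<lambda>_. 1 / real (card (UNIV :: 'a set)))"
    by (simp add: fun_eq_iff pbar_def)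
  then show ?thesis by (simp add: prob_dist_uniform)
qed

lemma simplex_metric01D:
  assumes "simplex_metric01 dl" "prob_dist q" "prob_dist q'"
  shows "0 \<le> dl q q'" "dl q q' \<le> 1" "dl q q' = dl q' q" "dl q q = 0"
  using assms unfolding simplex_metric01_def by blast+

lemma simplex_metric01_triangle:
  assumes "simplex_metric01 dl" "prob_dist q" "prob_dist q'" "prob_dist q''"
  shows "dl q q'' \<le> dl q q' + dl q' q''"
  using assms unfolding simplex_metric01_def by blast

lemma lnorm_dist_pbar_le_capp:
  assumes L: "1 \<le> L" and k: "1 \<le> k"
    and p_dist: "\<forall>l\<in>{1..L}. \<forall>y. prob_dist (p l y)"
    and d_metric: "\<forall>l\<in>{1..L}. simplex_metric01 (d l)"
    and "extends x w"
  shows "lnorm L k (\<lambda>l. d l (pbar L X p n l w) (p l x)) \<le> capp L k d p X n w"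
proof -
  define S where "S = {lnorm L k (\<lambda>l. d l (p l (z l)) (pbar L X p n l w)) | z. \<forall>l\<in>{1..L}. extends (z l) w}"
  have dist: "prob_dist (p l y)" "prob_dist (pbar L X p n l w)" "simplex_metric01 (d l)"
    if "l \<in> {1..L}" for l y
    using p_dist d_metric prob_dist_pbar[OF that] that by blast+
  have "lnorm L k (\<lambda>l. d l (pbar L X p n l w) (p l x)) = lnorm L k (\<lambda>l. d l (p l x) (pbar L X p n l w))"
    using simplex_metric01D(3)[OF dist(3,2,1)] by (intro lnorm_cong) simp
  also have "\<dots> \<in> S"
    unfolding S_def using \<open>extends x w\<close> by (intro CollectI exI[of _ "\<lambda>_. x"]) simp
  moreover have "bdd_above S"
  proof (rule bdd_aboveI)
    fix s assume "s \<in> S"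
    then obtain z where "s = lnorm L k (\<lambda>l. d l (p l (z l)) (pbar L X p n l w))"
      unfolding S_def by blast
    also have "\<dots> \<le> 1"
      using simplex_metric01D(1,2)[OF dist(3,1,2)] by (intro lnorm_le_const[OF L k]) simp
    finally show "s \<le> 1" .
  qed
  ultimately show ?thesis
    unfolding capp_def S_def[symmetric] by (simp add: cSup_upper)
qed

lemma lnorm_dist_phat_pbar_le_conf:
  assumes L: "1 \<le> L" and exps: "agct_exponents k r m"
    and p_dist: "\<forall>l\<in>{1..L}. \<forall>y. prob_dist (p l y)"
    and d_metric: "\<forall>l\<in>{1..L}. simplex_metric01 (d l)"
    and good: "Good L m d p X n conf"
  shows "lnorm L k (\<lambda>l. d l (phat L X n l w) (pbar L X p n l w)) \<le> lnorm L r (\<lambda>l. conf l (Fin w))"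
proof -
  have k: "1 \<le> k" using exps by (simp add: agct_exponents_def)
  have dist: "prob_dist (phat L X n l w)" "prob_dist (pbar L X p n l w)" "simplex_metric01 (d l)"
    if "l \<in> {1..L}" for l
    using p_dist d_metric prob_dist_phat[OF that] prob_dist_pbar[OF that] that by blast+
  show ?thesis
  proof (cases "allpos L X n w")
    case False
    then have "phat L X n l w = pbar L X p n l w" for l
      by (simp add: fun_eq_iff phat_def pbar_def)
    then have "d l (phat L X n l w) (pbar L X p n l w) = 0" if "l \<in> {1..L}" for l
      using simplex_metric01D(4)[OF dist(3,2,2)[OF that]] by simp
    then have "lnorm L k (\<lambda>l. d l (phat L X n l w) (pbar L X p n l w)) \<le> 0"
      by (intro lnorm_le_const[OF L k]) simp
    then show ?thesis using lnorm_nonneg[OF L] by (rule order_trans)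
  next
    case True
    define f where "f l = d l (pbar L X p n l w) (phat L X n l w) / conf l (Fin w)" for l
    from good True have zero: "\<forall>l\<in>{1..L}. conf l (Fin w) = 0 \<longrightarrow> d l (pbar L X p n l w) (phat L X n l w) = 0"
      and f: "lnorm L m f \<le> 1"
      unfolding Good_def f_def by blast+
    \<comment> \<open>Good forces d = 0 where conf = 0, so d = (d / conf) * conf even though x / 0 = 0.\<close>
    have "lnorm L k (\<lambda>l. d l (phat L X n l w) (pbar L X p n l w)) = lnorm L k (\<lambda>l. f l * conf l (Fin w))"
      using zero simplex_metric01D(3)[OF dist(3,1,2)] unfolding f_def by (intro lnorm_cong) auto
    also have "\<dots> \<le> lnorm L m f * lnorm L r (\<lambda>l. conf l (Fin w))"
      by (rule lnorm_mult_le[OF L exps])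
    also have "\<dots> \<le> lnorm L r (\<lambda>l. conf l (Fin w))"
      using f lnorm_nonneg[OF L] by (simp add: mult_left_le_one_le)
    finally show ?thesis .
  qed
qed

lemma lnorm_dist_phat_le_capp_conf:
  assumes L: "1 \<le> L" and exps: "agct_exponents k r m"
    and p_dist: "\<forall>l\<in>{1..L}. \<forall>y. prob_dist (p l y)"
    and d_metric: "\<forall>l\<in>{1..L}. simplex_metric01 (d l)"
    and good: "Good L m d p X n conf"
    and "extends x w"
  shows "lnorm L k (\<lambda>l. d l (phat L X n l w) (p l x))
           \<le> capp L k d p X n w + lnorm L r (\<lambda>l. conf l (Fin w))"
proof -
  have k: "1 \<le> k" using exps by (simp add: agct_exponents_def)
  let ?u = "\<lambda>l. d l (phat L X n l w) (pbar L X p n l w)" and ?v = "\<lambda>l. d l (pbar L X p n l w) (p l x)"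
  have "\<bar>d l (phat L X n l w) (p l x)\<bar> \<le> \<bar>?u l + ?v l\<bar>" if "l \<in> {1..L}" for l
  proof -
    have dist: "prob_dist (phat L X n l w)" "prob_dist (pbar L X p n l w)" "prob_dist (p l x)"
      "simplex_metric01 (d l)"
      using p_dist d_metric prob_dist_phat[OF that] prob_dist_pbar[OF that] that by blast+
    show ?thesis
      using simplex_metric01D(1)[OF dist(4,1,3)] simplex_metric01D(1)[OF dist(4,1,2)]
        simplex_metric01D(1)[OF dist(4,2,3)] simplex_metric01_triangle[OF dist(4,1,2,3)]
      by simp
  qed
  then have "lnorm L k (\<lambda>l. d l (phat L X n l w) (p l x)) \<le> lnorm L k (\<lambda>l. ?u l + ?v l)"
    by (rule lnorm_mono[OF L k])
  also have "\<dots> \<le> lnorm L k ?u + lnorm L k ?v"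
    by (rule lnorm_add_le[OF L k])
  also have "\<dots> \<le> lnorm L r (\<lambda>l. conf l (Fin w)) + capp L k d p X n w"
    using lnorm_dist_phat_pbar_le_conf[OF L exps p_dist d_metric good]
      lnorm_dist_pbar_le_capp[OF L k p_dist d_metric \<open>extends x w\<close>]
    by (rule add_mono)
  finally show ?thesis by simp
qed

theorem corollary3p1:
  fixes L n :: nat
    and X :: "nat \<Rightarrow> int \<Rightarrow> 'a::finite"
    and p :: "nat \<Rightarrow> (nat \<Rightarrow> 'a) \<Rightarrow> 'a \<Rightarrow> real"
    and d :: "nat \<Rightarrow> ('a \<Rightarrow> real) \<Rightarrow> ('a \<Rightarrow> real) \<Rightarrow> real"
    and conf :: "nat \<Rightarrow> 'a str \<Rightarrow> real"
    and k r m :: enat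
    and T :: "'a list set"
    and x :: "nat \<Rightarrow> 'a"
  assumes L: "1 \<le> L"
    and p_dist: "\<forall>l\<in>{1..L}. \<forall>y. prob_dist (p l y)"
    and d_metric: "\<forall>l\<in>{1..L}. simplex_metric01 (d l)"
    and conf_bounds: "\<forall>l\<in>{1..L}. \<forall>w. 0 \<le> conf l w \<and> conf l w \<le> 1"
    and conf_mono: "\<forall>l\<in>{1..L}. \<forall>w w'. str_suffix w w' \<longrightarrow> conf l w \<le> conf l w'"
    and exps: "agct_exponents k r m"
    and optimal: "is_optimal_tree L k r d p X n conf T"
    and good: "Good L m d p X n conf"
  shows "lnorm L k (\<lambda>l. d l (phat L X n l (tree_node T x)) (p l x))
           \<le> capp L k d p X n (tree_node T x) + lnorm L r (\<lambda>l. conf l (Fin (tree_node T x)))"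
  by (rule lnorm_dist_phat_le_capp_conf[OF L exps p_dist d_metric good])
    (simp add: extends_def tree_node_def)

end
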